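(* Suppose $f$ is twice differentiable at every point of $\mathbb{R}^{n\times p}$, and let $X\in\mathcal{S}_{n,p}$ be a first-order stationary point of (OCP). Then every eigenvalue of $\mathrm{hess} f(X)$ is an eigenvalue of $\nabla^2h(X)$; conversely, every eigenvalue of $\nabla^2h(X)$ is either an eigenvalue of $\mathrm{hess} f(X)$ or is at least $2\beta-M_2$.
   Context: $f:\mathbb{R}^{n\times p}\to\mathbb{R}$ ($n\ge p$) is differentiable with $f,\nabla f$ locally Lipschitz. (OCP): $\min f(X)$ s.t. $X^\top X=I_p$; $\mathcal{S}_{n,p}=\{X:X^\top X=I_p\}$. $\langle A,B\rangle=\mathrm{tr}(A^\top B)$, $\Phi(M):=\frac12(M+M^\top)$. For $X\in\mathcal{S}_{n,p}$, $\mathcal{T}_X:=\{D:\Phi(D^\top X)=0\}$ and $\mathcal{P}_{\mathcal{T}_X}(W):=W-X\Phi(X^\top W)$ is the orthogonal projection onto $\mathcal{T}_X$. $X\in\mathcal{S}_{n,p}$ is a first-order stationary point of (OCP) if $\nabla f(X)-X\Phi(X^\top\nabla f(X))=0$. The Riemannian Hessian $\mathrm{hess} f(X):\mathcal{T}_X\to\mathcal{T}_X$ is $\mathrm{hess} f(X)[D]:=\mathcal{P}_{\mathcal{T}_X}\big(\nabla^2f(X)[D]-D\Phi(X^\top\nabla f(X))\big)$, so that $\langle D_1,\mathrm{hess} f(X)[D_2]\rangle=\langle D_1,\nabla^2f(X)[D_2]-D_2\Phi(X^\top\nabla f(X))\rangle$ for $D_1,D_2\in\mathcal{T}_X$. $\mathcal{A}(X):=\frac32I_p-\frac12X^\top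 X$, $g(X):=f(X\mathcal{A}(X))$, $h(X):=g(X)+\frac\beta4\|X^\top X-I_p\|_F^2$ with $\beta>0$; $\nabla^2h(X)$ is viewed as a linear operator on $\mathbb{R}^{n\times p}$. $\Omega:=\{X:\|X\|_2\le1+\frac1{12}\}$, $M_2:=\sup_{X\ne Y\in\Omega}\frac{\|\nabla g(X)-\nabla g(Y)\|_F}{\|X-Y\|_F}$. *)

theory Defs
  imports "HOL-Analysis.Analysis"
begin

text \<open>Matrices in R^{n x p} are represented as real^'p^'n (rows indexed by 'n).
  The inner product on this type is the Frobenius inner product tr(A^T B),
  and norm is the Frobenius norm.\<close>

definition sym_part :: "real^'k^'k \<Rightarrow> real^'k^'k" where
  "sym_part M = (1/2) *\<^sub>R (M + transpose M)"

definition stiefel :: "(real^'p^'n) set" where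
  "stiefel = {X. transpose X ** X = mat 1}"

definition tangent_space :: "real^'p^'n \<Rightarrow> (real^'p^'n) set" where
  "tangent_space X = {D. sym_part (transpose D ** X) = 0}"

definition proj_tangent :: "real^'p^'n \<Rightarrow> real^'p^'n \<Rightarrow> real^'p^'n" where
  "proj_tangent X W = W - X ** sym_part (transpose X ** W)"

definition egrad :: "('a::euclidean_space \<Rightarrow> real) \<Rightarrow> 'a \<Rightarrow> 'a" where
  "egrad \<phi> x = (\<Sum>b\<in>Basis. frechet_derivative \<phi> (at x) b *\<^sub>R b)"

definition ehess :: "('a::euclidean_space \<Rightarrow> real) \<Rightarrow> 'a \<Rightarrow> 'a \<Rightarrow> 'a" where
  "ehess \<phi> x = frechet_derivative (egrad \<phi>) (at x)"

definition rhess :: "(real^'p^'n \<Rightarrow> real) \<Rightarrow> real^'p^'n \<Rightarrow> real^'p^'n \<Rightarrow> real^'p^'n" where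
  "rhess f X D = proj_tangent X (ehess f X D - D ** sym_part (transpose X ** egrad f X))"

definition first_order_stationary :: "(real^'p^'n \<Rightarrow> real) \<Rightarrow> real^'p^'n \<Rightarrow> bool" where
  "first_order_stationary f X \<longleftrightarrow>
     X \<in> stiefel \<and> egrad f X - X ** sym_part (transpose X ** egrad f X) = 0"

definition calA :: "real^'p^'n \<Rightarrow> real^'p^'p" where
  "calA X = (3/2) *\<^sub>R mat 1 - (1/2) *\<^sub>R (transpose X ** X)"

definition g_of :: "(real^'p^'n \<Rightarrow> real) \<Rightarrow> real^'p^'n \<Rightarrow> real" where
  "g_of f X = f (X ** calA X)"

definition h_of :: "(real^'p^'n \<Rightarrow> real) \<Rightarrow> real \<Rightarrow> real^'p^'n \<Rightarrow> real" where
  "h_of f \<beta> X = g_of f X + \<beta> / 4 * (norm (transpose X ** X - mat 1))\<^sup>2"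

definition spec_norm :: "real^'p^'n \<Rightarrow> real" where
  "spec_norm X = onorm (\<lambda>v. X *v v)"

definition Omega :: "(real^'p^'n) set" where
  "Omega = {X. spec_norm X \<le> 1 + 1/12}"

definition M2 :: "(real^'p^'n \<Rightarrow> real) \<Rightarrow> real" where
  "M2 f = Sup {norm (egrad (g_of f) X - egrad (g_of f) Y) / norm (X - Y) | X Y.
                X \<in> Omega \<and> Y \<in> Omega \<and> X \<noteq> Y}"

definition locally_lipschitz :: "('a::metric_space \<Rightarrow> 'b::metric_space) \<Rightarrow> bool" where
  "locally_lipschitz \<phi> \<longleftrightarrow>
     (\<forall>x. \<exists>r>0. \<exists>L. \<forall>y\<in>ball x r. \<forall>z\<in>ball x r. dist (\<phi> y) (\<phi> z) \<le> L * dist y z)"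

definition is_eigenvalue_on :: "'a::real_vector set \<Rightarrow> ('a \<Rightarrow> 'a) \<Rightarrow> real \<Rightarrow> bool" where
  "is_eigenvalue_on S T l \<longleftrightarrow> (\<exists>v\<in>S. v \<noteq> 0 \<and> T v = l *\<^sub>R v)"

end

theory Submission
  imports Defs
begin

text \<open>
  Let \<open>\<Psi>(Y) = Y \<A>(Y) = 3/2 Y - 1/2 Y Y\<^sup>T Y\<close>, so that \<open>g = f \<circ> \<Psi>\<close>. On the Stiefel
  manifold \<open>\<Psi>\<close> is the identity and its Jacobian is the orthogonal projection onto the tangent
  space. At a first-order stationary point \<open>X\<close> we have \<open>\<nabla>f(X) = X S\<close> with \<open>S\<close> symmetric,
  and a direct computation shows that \<open>\<nabla>\<^sup>2h(X)\<close> agrees with \<open>hess f(X)\<close> on tangent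
  vectors, while on normal vectors \<open>X W\<close> (\<open>W\<close> symmetric) it equals \<open>\<nabla>\<^sup>2g(X) + 2\<beta>\<close> and takes
  values in the normal space. Hence an eigenvector of \<open>\<nabla>\<^sup>2h(X)\<close> either has a nonzero tangent
  component, which is an eigenvector of \<open>hess f(X)\<close> for the same eigenvalue, or is normal, in
  which case its eigenvalue differs from \<open>2\<beta>\<close> by at most \<open>\<parallel>\<nabla>\<^sup>2g(X)\<parallel>\<close>. Finally
  \<open>\<parallel>\<nabla>\<^sup>2g(X)\<parallel> \<le> M\<^sub>2\<close> because \<open>X\<close> is an interior point of \<open>\<Omega>\<close>, on which \<open>\<nabla>g\<close> is
  \<open>M\<^sub>2\<close>-Lipschitz (it is locally Lipschitz, hence Lipschitz on the bounded set \<open>\<Omega>\<close>).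
\<close>

section \<open>Matrix algebra and the Frobenius inner product\<close>

lemma matrix_add_rdistrib: "((A::real^'n^'m) + B) ** C = A ** C + B ** C"
  by (vector matrix_matrix_mult_def sum.distrib[symmetric] field_simps)

lemma matrix_diff_ldistrib: "(A::real^'n^'m) ** (B - C) = A ** B - A ** C"
  by (vector matrix_matrix_mult_def sum_subtractf[symmetric] field_simps)

lemma matrix_diff_rdistrib: "((A::real^'n^'m) - B) ** C = A ** C - B ** C"
  by (vector matrix_matrix_mult_def sum_subtractf[symmetric] field_simps)

lemma matrix_minus_left: "(- (A::real^'n^'m)) ** C = - (A ** C)"
  by (vector matrix_matrix_mult_def sum_negf[symmetric])

lemma matrix_minus_right: "(A::real^'n^'m) ** (- C) = - (A ** C)"
  by (vector matrix_matrix_mult_def sum_negf[symmetric])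

lemma matrix_scaleR_left: "(k *\<^sub>R (A::real^'n^'m)) ** C = k *\<^sub>R (A ** C)"
  by (simp add: scalar_matrix_assoc)

lemma matrix_scaleR_right: "(A::real^'n^'m) ** (k *\<^sub>R C) = k *\<^sub>R (A ** C)"
  by (simp add: matrix_scalar_ac scalar_matrix_assoc)

lemma transpose_add: "transpose ((A::real^'n^'m) + B) = transpose A + transpose B"
  by (simp add: transpose_def vec_eq_iff)

lemma transpose_diff: "transpose ((A::real^'n^'m) - B) = transpose A - transpose B"
  by (simp add: transpose_def vec_eq_iff)

lemma transpose_minus: "transpose (- (A::real^'n^'m)) = - transpose A"
  by (simp add: transpose_def vec_eq_iff)

lemma transpose_zero: "transpose (0::real^'n^'m) = 0"
  by (simp add: transpose_def vec_eq_iff)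

lemmas matrix_simps = matrix_add_ldistrib matrix_add_rdistrib matrix_diff_ldistrib
  matrix_diff_rdistrib matrix_minus_left matrix_minus_right matrix_scaleR_left matrix_scaleR_right
  transpose_add transpose_diff transpose_minus transpose_zero transpose_scalar
  matrix_transpose_mul matrix_mul_assoc[symmetric]

lemma inner_matrix_mult_left: "((A::real^'k^'n) ** B) \<bullet> C = B \<bullet> (transpose A ** C)"
proof -
  have "(A ** B) \<bullet> C = (\<Sum>i\<in>UNIV. \<Sum>l\<in>UNIV. \<Sum>j\<in>UNIV. A$i$j * B$j$l * C$i$l)"
    unfolding inner_vec_def matrix_matrix_mult_def by (simp add: sum_distrib_right)
  also have "\<dots> = (\<Sum>j\<in>UNIV. \<Sum>i\<in>UNIV. \<Sum>l\<in>UNIV. A$i$j * B$j$l * C$i$l)"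
    by (subst sum.swap) (rule sum.cong[OF refl], rule sum.swap)
  also have "\<dots> = (\<Sum>j\<in>UNIV. \<Sum>l\<in>UNIV. \<Sum>i\<in>UNIV. A$i$j * B$j$l * C$i$l)"
    by (rule sum.cong[OF refl], rule sum.swap)
  also have "\<dots> = B \<bullet> (transpose A ** C)"
    unfolding inner_vec_def matrix_matrix_mult_def transpose_def
    by (simp add: sum_distrib_left mult_ac)
  finally show ?thesis .
qed

lemma inner_matrix_mult_right: "((A::real^'k^'n) ** B) \<bullet> C = A \<bullet> (C ** transpose B)"
proof -
  have "(A ** B) \<bullet> C = (\<Sum>i\<in>UNIV. \<Sum>l\<in>UNIV. \<Sum>j\<in>UNIV. A$i$j * B$j$l * C$i$l)"
    unfolding inner_vec_def matrix_matrix_mult_def by (simp add: sum_distrib_right)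
  also have "\<dots> = (\<Sum>i\<in>UNIV. \<Sum>j\<in>UNIV. \<Sum>l\<in>UNIV. A$i$j * B$j$l * C$i$l)"
    by (rule sum.cong[OF refl], rule sum.swap)
  also have "\<dots> = A \<bullet> (C ** transpose B)"
    unfolding inner_vec_def matrix_matrix_mult_def transpose_def
    by (simp add: sum_distrib_left mult_ac)
  finally show ?thesis .
qed

lemma inner_transpose: "transpose (A::real^'k^'n) \<bullet> transpose B = A \<bullet> B"
  unfolding inner_vec_def transpose_def by (simp, subst sum.swap, simp)

lemma bounded_bilinear_matrix_mult: "bounded_bilinear (\<lambda>(A::real^'k^'n) (B::real^'m^'k). A ** B)"
  unfolding bilinear_conv_bounded_bilinear[symmetric] bilinear_def
  by (auto intro!: linearI simp: matrix_simps)

lemma bounded_linear_transpose: "bounded_linear (transpose :: real^'k^'n \<Rightarrow> real^'n^'k)"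
  by (rule linear_conv_bounded_linear[THEN iffD1], rule linearI, auto simp: matrix_simps)

lemmas has_derivative_matrix_mult = bounded_bilinear.FDERIV[OF bounded_bilinear_matrix_mult]
lemmas has_derivative_transpose = bounded_linear.has_derivative[OF bounded_linear_transpose]

section \<open>Locally Lipschitz maps\<close>

lemma locally_lipschitz_iff_lipschitz_on_compact:
  fixes \<phi> :: "'a::heine_borel \<Rightarrow> 'b::metric_space"
  shows "locally_lipschitz \<phi> \<longleftrightarrow> (\<forall>K. compact K \<longrightarrow> (\<exists>L. L-lipschitz_on K \<phi>))"
proof (intro iffI allI impI)
  fix K :: "'a set" assume ll: "locally_lipschitz \<phi>" and K: "compact K"
  have llK: "local_lipschitz {0::real} K (\<lambda>_. \<phi>)"
  proof (rule local_lipschitzI)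
    fix t x
    obtain r L where r: "r > 0" and L: "\<forall>y\<in>ball x r. \<forall>z\<in>ball x r. dist (\<phi> y) (\<phi> z) \<le> L * dist y z"
      using ll unfolding locally_lipschitz_def by blast
    have "(max L 0)-lipschitz_on (cball x (r/2) \<inter> K) \<phi>"
    proof (rule lipschitz_onI)
      fix y z assume "y \<in> cball x (r/2) \<inter> K" "z \<in> cball x (r/2) \<inter> K"
      then have "y \<in> ball x r" "z \<in> ball x r" using r by auto
      then have "dist (\<phi> y) (\<phi> z) \<le> L * dist y z" using L by blast
      also have "\<dots> \<le> max L 0 * dist y z" by (simp add: mult_right_mono)
      finally show "dist (\<phi> y) (\<phi> z) \<le> max L 0 * dist y z" .
    qed simp
    then show "\<exists>u>0. \<exists>L. \<forall>s\<in>cball t u \<inter> {0}. L-lipschitz_on (cball x u \<inter> K) \<phi>"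
      using r half_gt_zero by blast
  qed
  have cont: "continuous_on {0::real} (\<lambda>_. \<phi> x)" for x
    by (rule continuous_on_const)
  show "\<exists>L. L-lipschitz_on K \<phi>"
    by (rule local_lipschitz_compact_implies_lipschitz[OF llK K compact_sing cont]) blast
next
  assume "\<forall>K. compact K \<longrightarrow> (\<exists>L. L-lipschitz_on K \<phi>)"
  then have "\<exists>L. L-lipschitz_on (cball x 1) \<phi>" for x using compact_cball by blast
  then show "locally_lipschitz \<phi>"
    unfolding locally_lipschitz_def by (meson lipschitz_onD ball_subset_cball subsetD zero_less_one)
qed

lemma locally_lipschitz_imp_lipschitz_on_compact:
  fixes \<phi> :: "'a::heine_borel \<Rightarrow> 'b::metric_space"
  assumes "locally_lipschitz \<phi>" "compact K"
  obtains L where "L-lipschitz_on K \<phi>"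
  using assms locally_lipschitz_iff_lipschitz_on_compact by blast

lemma lipschitz_on_bounded_bilinear:
  fixes f :: "'a::metric_space \<Rightarrow> 'b::real_normed_vector" and g :: "'a \<Rightarrow> 'c::real_normed_vector"
  assumes b: "bounded_bilinear b" and f: "C-lipschitz_on U f" and g: "D-lipschitz_on U g"
    and "bounded (f ` U)" "bounded (g ` U)"
  obtains L where "L-lipschitz_on U (\<lambda>x. b (f x) (g x))"
proof -
  obtain K where K: "K > 0" "\<And>u w. norm (b u w) \<le> norm u * norm w * K"
    using bounded_bilinear.pos_bounded[OF b] by blast
  obtain Bf Bg where Bf: "Bf > 0" "\<And>x. x \<in> U \<Longrightarrow> norm (f x) \<le> Bf"
    and Bg: "Bg > 0" "\<And>x. x \<in> U \<Longrightarrow> norm (g x) \<le> Bg"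
    using \<open>bounded (f ` U)\<close> \<open>bounded (g ` U)\<close> by (auto simp: bounded_pos)
  have "(K * (C * Bg + Bf * D))-lipschitz_on U (\<lambda>x. b (f x) (g x))"
  proof (rule lipschitz_onI)
    fix x y assume xy: "x \<in> U" "y \<in> U"
    have "b (f x) (g x) - b (f y) (g y) = b (f x - f y) (g x) + b (f y) (g x - g y)"
      by (simp add: bounded_bilinear.diff_left[OF b] bounded_bilinear.diff_right[OF b])
    then have "dist (b (f x) (g x)) (b (f y) (g y)) \<le> norm (b (f x - f y) (g x)) + norm (b (f y) (g x - g y))"
      by (simp add: dist_norm norm_triangle_ineq)
    also have "\<dots> \<le> dist (f x) (f y) * norm (g x) * K + norm (f y) * dist (g x) (g y) * K"
      using K(2) by (simp add: dist_norm add_mono)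
    also have "\<dots> \<le> (C * dist x y) * Bg * K + Bf * (D * dist x y) * K"
      using xy K(1) Bf Bg lipschitz_onD[OF f xy] lipschitz_onD[OF g xy]
        lipschitz_on_nonneg[OF f] lipschitz_on_nonneg[OF g]
      by (intro add_mono mult_right_mono mult_mono) auto
    finally show "dist (b (f x) (g x)) (b (f y) (g y)) \<le> K * (C * Bg + Bf * D) * dist x y"
      by (simp add: algebra_simps)
  qed (use K(1) Bf(1) Bg(1) lipschitz_on_nonneg[OF f] lipschitz_on_nonneg[OF g] in simp)
  then show ?thesis ..
qed

lemma locally_lipschitz_compose:
  fixes \<phi> :: "'b::heine_borel \<Rightarrow> 'c::metric_space" and \<psi> :: "'a::heine_borel \<Rightarrow> 'b"
  assumes "locally_lipschitz \<phi>" "locally_lipschitz \<psi>"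
  shows "locally_lipschitz (\<lambda>x. \<phi> (\<psi> x))"
  unfolding locally_lipschitz_iff_lipschitz_on_compact
proof (intro allI impI)
  fix K :: "'a set" assume K: "compact K"
  then obtain C where C: "C-lipschitz_on K \<psi>"
    by (rule locally_lipschitz_imp_lipschitz_on_compact[OF assms(2)])
  then have "compact (\<psi> ` K)"
    by (intro compact_continuous_image[OF lipschitz_on_continuous_on K])
  then obtain D where "D-lipschitz_on (\<psi> ` K) \<phi>"
    by (rule locally_lipschitz_imp_lipschitz_on_compact[OF assms(1)])
  then show "\<exists>L. L-lipschitz_on K (\<lambda>x. \<phi> (\<psi> x))"
    using lipschitz_on_compose2[OF C] by blast
qed

lemma locally_lipschitz_ident: "locally_lipschitz (\<lambda>x::'a::heine_borel. x)"
  unfolding locally_lipschitz_iff_lipschitz_on_compact by (blast intro: lipschitz_on_id)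

lemma locally_lipschitz_bounded_linear:
  fixes T :: "'a::{heine_borel,real_normed_vector} \<Rightarrow> 'b::real_normed_vector"
  assumes "bounded_linear T"
  shows "locally_lipschitz T"
  unfolding locally_lipschitz_iff_lipschitz_on_compact
proof (intro allI impI)
  fix K :: "'a set"
  obtain B where "B-lipschitz_on K T" by (rule bounded_linear.lipschitz_boundE[OF assms])
  then show "\<exists>L. L-lipschitz_on K T" ..
qed

lemma locally_lipschitz_add:
  fixes \<phi> \<psi> :: "'a::heine_borel \<Rightarrow> 'b::real_normed_vector"
  assumes "locally_lipschitz \<phi>" "locally_lipschitz \<psi>"
  shows "locally_lipschitz (\<lambda>x. \<phi> x + \<psi> x)"
  unfolding locally_lipschitz_iff_lipschitz_on_compact
proof (intro allI impI)
  fix K :: "'a set" assume K: "compact K"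
  obtain C D where "C-lipschitz_on K \<phi>" "D-lipschitz_on K \<psi>"
    using locally_lipschitz_imp_lipschitz_on_compact[OF assms(1) K]
      locally_lipschitz_imp_lipschitz_on_compact[OF assms(2) K] by metis
  then show "\<exists>L. L-lipschitz_on K (\<lambda>x. \<phi> x + \<psi> x)"
    by (blast intro: lipschitz_on_add)
qed

lemma locally_lipschitz_diff:
  fixes \<phi> \<psi> :: "'a::heine_borel \<Rightarrow> 'b::real_normed_vector"
  assumes "locally_lipschitz \<phi>" "locally_lipschitz \<psi>"
  shows "locally_lipschitz (\<lambda>x. \<phi> x - \<psi> x)"
  unfolding locally_lipschitz_iff_lipschitz_on_compact
proof (intro allI impI)
  fix K :: "'a set" assume K: "compact K"
  obtain C D where "C-lipschitz_on K \<phi>" "D-lipschitz_on K \<psi>"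
    using locally_lipschitz_imp_lipschitz_on_compact[OF assms(1) K]
      locally_lipschitz_imp_lipschitz_on_compact[OF assms(2) K] by metis
  then show "\<exists>L. L-lipschitz_on K (\<lambda>x. \<phi> x - \<psi> x)"
    by (blast intro: lipschitz_on_diff)
qed

lemma locally_lipschitz_bounded_bilinear:
  fixes \<phi> :: "'a::heine_borel \<Rightarrow> 'b::real_normed_vector" and \<psi> :: "'a \<Rightarrow> 'c::real_normed_vector"
  assumes b: "bounded_bilinear b" and "locally_lipschitz \<phi>" "locally_lipschitz \<psi>"
  shows "locally_lipschitz (\<lambda>x. b (\<phi> x) (\<psi> x) :: 'd::real_normed_vector)"
  unfolding locally_lipschitz_iff_lipschitz_on_compact
proof (intro allI impI)
  fix K :: "'a set" assume K: "compact K"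
  obtain C D where C: "C-lipschitz_on K \<phi>" and D: "D-lipschitz_on K \<psi>"
    using locally_lipschitz_imp_lipschitz_on_compact[OF assms(2) K]
      locally_lipschitz_imp_lipschitz_on_compact[OF assms(3) K] by metis
  have "bounded (\<phi> ` K)" "bounded (\<psi> ` K)"
    using compact_continuous_image[OF lipschitz_on_continuous_on[OF C] K]
      compact_continuous_image[OF lipschitz_on_continuous_on[OF D] K]
    by (simp_all add: compact_imp_bounded)
  then show "\<exists>L. L-lipschitz_on K (\<lambda>x. b (\<phi> x) (\<psi> x))"
    by (blast elim: lipschitz_on_bounded_bilinear[OF b C D])
qed

lemma locally_lipschitz_scaleR:
  fixes \<phi> :: "'a::heine_borel \<Rightarrow> 'b::{real_normed_vector,heine_borel}"
  shows "locally_lipschitz \<phi> \<Longrightarrow> locally_lipschitz (\<lambda>x. c *\<^sub>R \<phi> x)"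
  by (rule locally_lipschitz_compose[OF locally_lipschitz_bounded_linear[OF bounded_linear_scaleR_right]])

lemma locally_lipschitz_transpose:
  fixes \<phi> :: "'a::heine_borel \<Rightarrow> real^'k^'m"
  shows "locally_lipschitz \<phi> \<Longrightarrow> locally_lipschitz (\<lambda>x. transpose (\<phi> x))"
  by (rule locally_lipschitz_compose[OF locally_lipschitz_bounded_linear[OF bounded_linear_transpose]])

lemma locally_lipschitz_matrix_mult:
  fixes \<phi> :: "'a::heine_borel \<Rightarrow> real^'k^'m" and \<psi> :: "'a \<Rightarrow> real^'j^'k"
  shows "locally_lipschitz \<phi> \<Longrightarrow> locally_lipschitz \<psi> \<Longrightarrow> locally_lipschitz (\<lambda>x. \<phi> x ** \<psi> x)"
  by (rule locally_lipschitz_bounded_bilinear[OF bounded_bilinear_matrix_mult])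

section \<open>Euclidean gradients and Hessians\<close>

lemma egrad_eqI:
  fixes \<phi> :: "'a::euclidean_space \<Rightarrow> real"
  assumes "(\<phi> has_derivative (\<lambda>v. G \<bullet> v)) (at x)"
  shows "egrad \<phi> x = G"
proof -
  have "frechet_derivative \<phi> (at x) = (\<lambda>v. G \<bullet> v)"
    using frechet_derivative_at[OF assms] by simp
  moreover have "(\<Sum>b\<in>Basis. (b \<bullet> G) *\<^sub>R b) = G"
    by (subst euclidean_representation[symmetric, of G])
       (simp add: inner_commute)
  ultimately show ?thesis unfolding egrad_def by (simp add: inner_commute)
qed

lemma has_derivative_egrad:
  fixes \<phi> :: "'a::euclidean_space \<Rightarrow> real"
  assumes "\<phi> differentiable (at x)"
  shows "(\<phi> has_derivative (\<lambda>v. egrad \<phi> x \<bullet> v)) (at x)"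
proof -
  let ?D = "frechet_derivative \<phi> (at x)"
  have D: "(\<phi> has_derivative ?D) (at x)"
    using assms frechet_derivative_works by blast
  have "?D v = egrad \<phi> x \<bullet> v" for v
  proof -
    have "?D v = ?D (\<Sum>b\<in>Basis. (v \<bullet> b) *\<^sub>R b)" by (simp add: euclidean_representation)
    also have "\<dots> = (\<Sum>b\<in>Basis. (b \<bullet> v) * ?D b)"
      using has_derivative_linear[OF D] by (simp add: linear_sum linear_scale inner_commute)
    also have "\<dots> = egrad \<phi> x \<bullet> v"
      unfolding egrad_def by (simp add: inner_sum_left mult.commute)
    finally show ?thesis .
  qed
  then have "?D = (\<lambda>v. egrad \<phi> x \<bullet> v)" by blast
  with D show ?thesis by simp
qed

lemma ehess_eqI:
  fixes \<phi> :: "'a::euclidean_space \<Rightarrow> real"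
  shows "(egrad \<phi> has_derivative A) (at x) \<Longrightarrow> ehess \<phi> x = A"
  unfolding ehess_def by (rule frechet_derivative_at[symmetric])

lemma linear_ehess:
  fixes \<phi> :: "'a::euclidean_space \<Rightarrow> real"
  shows "egrad \<phi> differentiable (at x) \<Longrightarrow> linear (ehess \<phi> x)"
  unfolding ehess_def using frechet_derivative_works has_derivative_linear by blast

lemma has_derivative_norm_le_lipschitz_at:
  fixes \<phi> :: "'a::real_normed_vector \<Rightarrow> 'b::real_normed_vector"
  assumes deriv: "(\<phi> has_derivative A) (at x)" and x: "x \<in> interior S"
    and lip: "\<And>y. y \<in> S \<Longrightarrow> norm (\<phi> y - \<phi> x) \<le> M * norm (y - x)"
  shows "norm (A v) \<le> M * norm v"
proof -
  define rem where "rem t = norm (\<phi> (x + t *\<^sub>R v) - \<phi> x - t *\<^sub>R A v) / \<bar>t\<bar>" for t :: real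
  have lin: "linear A" using deriv has_derivative_linear by blast
  have "((\<lambda>t. \<phi> (x + t *\<^sub>R v)) has_derivative (\<lambda>t. A (t *\<^sub>R v))) (at 0)"
    by (rule has_derivative_compose[of "\<lambda>t. x + t *\<^sub>R v"])
       (auto intro!: derivative_eq_intros simp: deriv)
  then have "(rem \<longlongrightarrow> 0) (at 0)"
    by (simp add: has_derivative_at linear_scale[OF lin] rem_def[abs_def])
  then have lim: "((\<lambda>t. M * norm v + rem t) \<longlongrightarrow> M * norm v) (at 0)"
    using tendsto_add[OF tendsto_const, of rem 0 _ "M * norm v"] by simp
  obtain e where "e > 0" "ball x e \<subseteq> S" using x mem_interior by blast
  moreover have "((\<lambda>t::real. x + t *\<^sub>R v) \<longlongrightarrow> x) (at 0)"
    by (auto intro!: tendsto_eq_intros)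
  ultimately have "\<forall>\<^sub>F t in at 0. x + t *\<^sub>R v \<in> S"
    by (auto dest!: tendstoD simp: dist_commute elim!: eventually_mono)
  moreover have "norm (A v) \<le> M * norm v + rem t" if "x + t *\<^sub>R v \<in> S" "t \<noteq> 0" for t
  proof -
    have "\<bar>t\<bar> * norm (A v) = norm ((\<phi> (x + t *\<^sub>R v) - \<phi> x) - (\<phi> (x + t *\<^sub>R v) - \<phi> x - t *\<^sub>R A v))"
      by simp
    also have "\<dots> \<le> norm (\<phi> (x + t *\<^sub>R v) - \<phi> x) + norm (\<phi> (x + t *\<^sub>R v) - \<phi> x - t *\<^sub>R A v)"
      by (rule norm_triangle_ineq4)
    also have "\<dots> \<le> \<bar>t\<bar> * (M * norm v + rem t)"
      using lip[OF that(1)] that(2) by (simp add: rem_def algebra_simps)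
    finally show ?thesis using that(2) by simp
  qed
  ultimately have "\<forall>\<^sub>F t in at 0. norm (A v) \<le> M * norm v + rem t"
    by (auto simp: eventually_at_filter elim!: eventually_mono)
  then show ?thesis by (rule tendsto_le[OF _ lim tendsto_const, rotated]) simp
qed

section \<open>The constraint dissolving map\<close>

definition dissolve :: "real^'p^'n \<Rightarrow> real^'p^'n" where
  "dissolve Y = (3/2) *\<^sub>R Y - (1/2) *\<^sub>R (Y ** (transpose Y ** Y))"

definition dissolve_derivative :: "real^'p^'n \<Rightarrow> real^'p^'n \<Rightarrow> real^'p^'n" where
  "dissolve_derivative Y E = (3/2) *\<^sub>R E
     - (1/2) *\<^sub>R (E ** (transpose Y ** Y) + Y ** (transpose E ** Y) + Y ** (transpose Y ** E))"

definition dissolve_second_derivative :: "real^'p^'n \<Rightarrow> real^'p^'n \<Rightarrow> real^'p^'n \<Rightarrow> real^'p^'n" where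
  "dissolve_second_derivative Y E G = -(1/2) *\<^sub>R (G ** (transpose E ** Y + transpose Y ** E)
     + E ** (transpose G ** Y) + Y ** (transpose G ** E) + E ** (transpose Y ** G) + Y ** (transpose E ** G))"

lemma matrix_mult_calA: "Y ** calA Y = dissolve Y"
  unfolding calA_def dissolve_def by (simp add: matrix_simps)

lemma has_derivative_dissolve: "(dissolve has_derivative dissolve_derivative Y) (at Y)"
proof -
  have "((\<lambda>Y. (3/2) *\<^sub>R Y - (1/2) *\<^sub>R (Y ** (transpose Y ** Y))) has_derivative
     (\<lambda>E. (3/2) *\<^sub>R E - (1/2) *\<^sub>R (Y ** (transpose Y ** E + transpose E ** Y) + E ** (transpose Y ** Y)))) (at Y)"
    by (intro has_derivative_diff has_derivative_scaleR_right has_derivative_matrix_mult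
        has_derivative_transpose has_derivative_ident)
  then show ?thesis unfolding dissolve_def[abs_def]
    by (rule has_derivative_eq_rhs) (auto simp: dissolve_derivative_def fun_eq_iff matrix_simps algebra_simps)
qed

lemma dissolve_derivative_adjoint: "dissolve_derivative Y G \<bullet> E = G \<bullet> dissolve_derivative Y E"
proof -
  have 1: "(G ** (transpose Y ** Y)) \<bullet> E = G \<bullet> (E ** (transpose Y ** Y))"
    by (simp add: inner_matrix_mult_right matrix_transpose_mul)
  have "(Y ** (transpose G ** Y)) \<bullet> E = (transpose G ** Y) \<bullet> (transpose Y ** E)"
    by (simp add: inner_matrix_mult_left)
  also have "\<dots> = transpose G \<bullet> (transpose Y ** E ** transpose Y)"
    by (simp add: inner_matrix_mult_right)
  also have "\<dots> = G \<bullet> (Y ** (transpose E ** Y))"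
    by (metis inner_transpose transpose_transpose matrix_transpose_mul matrix_mul_assoc)
  finally have 2: "(Y ** (transpose G ** Y)) \<bullet> E = G \<bullet> (Y ** (transpose E ** Y))" .
  have 3: "(Y ** (transpose Y ** G)) \<bullet> E = G \<bullet> (Y ** (transpose Y ** E))"
    using inner_matrix_mult_left[of "Y ** transpose Y" G E]
    by (simp add: matrix_transpose_mul matrix_mul_assoc)
  show ?thesis unfolding dissolve_derivative_def
    by (simp add: inner_diff_left inner_add_left inner_diff_right inner_add_right 1 2 3)
qed

lemma has_derivative_dissolve_derivative:
  assumes "(F has_derivative F') (at Y)"
  shows "((\<lambda>Y. dissolve_derivative Y (F Y)) has_derivative
    (\<lambda>E. dissolve_derivative Y (F' E) + dissolve_second_derivative Y E (F Y))) (at Y)"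
proof -
  have "((\<lambda>Y. (3/2) *\<^sub>R F Y - (1/2) *\<^sub>R (F Y ** (transpose Y ** Y) + Y ** (transpose (F Y) ** Y)
      + Y ** (transpose Y ** F Y)))
     has_derivative (\<lambda>h. (3/2) *\<^sub>R F' h - (1/2) *\<^sub>R ((F Y ** (transpose Y ** h + transpose h ** Y)
        + F' h ** (transpose Y ** Y)) + (Y ** (transpose (F Y) ** h + transpose (F' h) ** Y)
        + h ** (transpose (F Y) ** Y)) + (Y ** (transpose Y ** F' h + transpose h ** F Y)
        + h ** (transpose Y ** F Y))))) (at Y)"
    by (intro has_derivative_diff has_derivative_scaleR_right has_derivative_add
        has_derivative_matrix_mult has_derivative_transpose has_derivative_ident assms)
  then show ?thesis unfolding dissolve_derivative_def
    by (rule has_derivative_eq_rhs)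
       (simp add: fun_eq_iff dissolve_second_derivative_def matrix_simps algebra_simps)
qed

lemma has_derivative_g_of:
  assumes "\<forall>Y. f differentiable (at Y)"
  shows "(g_of f has_derivative (\<lambda>E. dissolve_derivative Y (egrad f (dissolve Y)) \<bullet> E)) (at Y)"
proof -
  have "((\<lambda>Y. f (dissolve Y)) has_derivative (\<lambda>E. egrad f (dissolve Y) \<bullet> dissolve_derivative Y E)) (at Y)"
    using assms by (intro has_derivative_compose[OF has_derivative_dissolve has_derivative_egrad]) auto
  then show ?thesis unfolding g_of_def[abs_def] matrix_mult_calA
    by (rule has_derivative_eq_rhs) (simp add: dissolve_derivative_adjoint fun_eq_iff)
qed

lemma has_derivative_gram_defect:
  "((\<lambda>Y::real^'p^'n. transpose Y ** Y - mat 1) has_derivative (\<lambda>E. transpose Y ** E + transpose E ** Y)) (at Y)"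
  by (rule has_derivative_eq_rhs[OF has_derivative_diff[OF has_derivative_matrix_mult[OF
        has_derivative_transpose[OF has_derivative_ident] has_derivative_ident] has_derivative_const]]) simp

lemma has_derivative_penalty:
  fixes Y :: "real^'p^'n"
  shows "((\<lambda>Y. \<beta> / 4 * (norm (transpose Y ** Y - mat 1))\<^sup>2) has_derivative
    (\<lambda>E. (\<beta> *\<^sub>R (Y ** (transpose Y ** Y - mat 1))) \<bullet> E)) (at Y)"
proof -
  let ?M = "transpose Y ** Y - mat 1"
  have M_sym: "transpose ?M = ?M" by (simp add: matrix_simps)
  have "((\<lambda>Y. \<beta> / 4 * ((transpose Y ** Y - mat 1) \<bullet> (transpose Y ** Y - mat 1))) has_derivative
     (\<lambda>E. \<beta> / 4 * (?M \<bullet> (transpose Y ** E + transpose E ** Y) + (transpose Y ** E + transpose E ** Y) \<bullet> ?M))) (at Y)"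
    by (intro has_derivative_mult_right has_derivative_inner has_derivative_gram_defect)
  moreover have "(transpose Y ** E) \<bullet> ?M = E \<bullet> (Y ** ?M)" for E
    by (simp add: inner_matrix_mult_left)
  moreover have "(transpose E ** Y) \<bullet> ?M = E \<bullet> (Y ** ?M)" for E
    by (metis inner_matrix_mult_right inner_transpose matrix_transpose_mul M_sym transpose_transpose)
  ultimately show ?thesis unfolding power2_norm_eq_inner
    by (elim has_derivative_eq_rhs)
       (auto simp: fun_eq_iff inner_add_left inner_add_right inner_commute algebra_simps)
qed

lemma egrad_g_of:
  "\<forall>Y. f differentiable (at Y) \<Longrightarrow> egrad (g_of f) Y = dissolve_derivative Y (egrad f (dissolve Y))"
  by (rule egrad_eqI, rule has_derivative_g_of)

lemma egrad_h_of:
  assumes "\<forall>Y. f differentiable (at Y)"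
  shows "egrad (h_of f \<beta>) Y = egrad (g_of f) Y + \<beta> *\<^sub>R (Y ** (transpose Y ** Y - mat 1))"
  unfolding h_of_def[abs_def] egrad_g_of[OF assms]
  by (rule egrad_eqI, rule has_derivative_eq_rhs,
      rule has_derivative_add[OF has_derivative_g_of[OF assms] has_derivative_penalty])
     (simp add: inner_add_left)

section \<open>Tangent and normal spaces of the Stiefel manifold\<close>

lemma sym_part_transpose: "sym_part (transpose M) = sym_part (M::real^'k^'k)"
  unfolding sym_part_def by (simp add: add.commute)

lemma transpose_sym_part: "transpose (sym_part M) = sym_part (M::real^'k^'k)"
  unfolding sym_part_def by (simp add: transpose_scalar transpose_add add.commute)

lemma sym_part_diff: "sym_part (A - B) = sym_part A - sym_part (B::real^'k^'k)"
  unfolding sym_part_def by (simp add: transpose_diff algebra_simps)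

lemma sym_part_symmetric: "transpose M = M \<Longrightarrow> sym_part M = (M::real^'k^'k)"
  unfolding sym_part_def by (simp add: scaleR_2[symmetric])

lemma sym_part_transpose_mult: "sym_part (transpose A ** B) = sym_part (transpose B ** (A::real^'k^'n))"
  by (metis sym_part_transpose matrix_transpose_mul transpose_transpose)

lemma tangent_space_iff: "D \<in> tangent_space X \<longleftrightarrow> transpose D ** X = - (transpose X ** D)"
proof -
  have "D \<in> tangent_space X \<longleftrightarrow> transpose D ** X + transpose X ** D = 0"
    unfolding tangent_space_def sym_part_def by (simp add: matrix_transpose_mul)
  then show ?thesis by (simp only: eq_neg_iff_add_eq_0)
qed

lemma matrix_mult_orthonormal_cancel:
  "transpose X ** X = mat 1 \<Longrightarrow> transpose X ** (X ** Z) = Z"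
  by (simp add: matrix_mul_assoc)

lemma proj_tangent_diff: "proj_tangent X (A - B) = proj_tangent X A - proj_tangent X B"
  and proj_tangent_add: "proj_tangent X (A + B) = proj_tangent X A + proj_tangent X B"
  and proj_tangent_scaleR: "proj_tangent X (c *\<^sub>R A) = c *\<^sub>R proj_tangent X A"
  unfolding proj_tangent_def sym_part_def by (simp_all add: matrix_simps algebra_simps)

lemma proj_tangent_zero: "proj_tangent X 0 = 0"
  using proj_tangent_scaleR[of X 0 0] by simp

lemma proj_tangent_in_tangent_space:
  assumes "transpose X ** X = mat 1"
  shows "proj_tangent X W \<in> tangent_space X"
proof -
  have "transpose X ** proj_tangent X W = transpose X ** W - sym_part (transpose X ** W)"
    unfolding proj_tangent_def by (simp add: matrix_simps matrix_mult_orthonormal_cancel[OF assms])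
  then have "sym_part (transpose X ** proj_tangent X W) = 0"
    by (simp add: sym_part_diff sym_part_symmetric transpose_sym_part)
  then show ?thesis unfolding tangent_space_def
    using sym_part_transpose_mult[of "proj_tangent X W" X] by simp
qed

lemma proj_tangent_tangent: "D \<in> tangent_space X \<Longrightarrow> proj_tangent X D = D"
  unfolding tangent_space_def proj_tangent_def by (simp add: sym_part_transpose_mult[of X D])

lemma proj_tangent_normal:
  "transpose X ** X = mat 1 \<Longrightarrow> transpose M = M \<Longrightarrow> proj_tangent X (X ** M) = 0"
  unfolding proj_tangent_def by (simp add: matrix_mult_orthonormal_cancel sym_part_symmetric)

lemma dissolve_stiefel: "transpose X ** X = mat 1 \<Longrightarrow> dissolve X = X"
  unfolding dissolve_def by (simp add: scaleR_left_diff_distrib[symmetric])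

lemma dissolve_derivative_stiefel:
  "transpose X ** X = mat 1 \<Longrightarrow> dissolve_derivative X W = proj_tangent X W"
  unfolding dissolve_derivative_def proj_tangent_def sym_part_def
  by (simp add: matrix_simps algebra_simps, simp add: vec_eq_iff algebra_simps)

lemma dissolve_second_derivative_tangent:
  fixes X D :: "real^'p^'n"
  assumes XtX: "transpose X ** X = mat 1" and S: "transpose S = S"
    and D: "D \<in> tangent_space X"
  shows "dissolve_second_derivative X D (X ** S) = - proj_tangent X (D ** S)"
proof -
  have DX: "transpose D ** (X ** Z) = - (transpose X ** (D ** Z))" for Z
    using D unfolding tangent_space_iff by (simp add: matrix_mul_assoc matrix_minus_left)
  show ?thesis using D
    unfolding dissolve_second_derivative_def proj_tangent_def sym_part_def tangent_space_iff
    by (simp add: matrix_simps matrix_mult_orthonormal_cancel[OF XtX] DX S XtX algebra_simps,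
        simp add: vec_eq_iff algebra_simps)
qed

lemma dissolve_second_derivative_normal:
  fixes X :: "real^'p^'n"
  assumes XtX: "transpose X ** X = mat 1" and S: "transpose S = S" and W: "transpose W = W"
  shows "dissolve_second_derivative X (X ** W) (X ** S) = X ** (- (3/2) *\<^sub>R (S ** W + W ** S))"
proof -
  have "W * 2 = 2 *\<^sub>R W" by (simp add: vec_eq_iff)
  then show ?thesis unfolding dissolve_second_derivative_def
    by (simp add: matrix_simps matrix_mult_orthonormal_cancel[OF XtX] XtX S W algebra_simps,
        simp add: vec_eq_iff algebra_simps)
qed

section \<open>Hessians of \<open>g\<close> and \<open>h\<close>\<close>

context
  fixes f :: "real^'p^'n \<Rightarrow> real"
  assumes f_differentiable: "\<forall>Y. f differentiable (at Y)"
    and egrad_differentiable: "\<forall>Y. egrad f differentiable (at Y)"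
begin

lemma has_derivative_egrad_g_of:
  "(egrad (g_of f) has_derivative (\<lambda>E. dissolve_derivative Y (ehess f (dissolve Y) (dissolve_derivative Y E))
     + dissolve_second_derivative Y E (egrad f (dissolve Y)))) (at Y)"
proof -
  have "((\<lambda>Y. egrad f (dissolve Y)) has_derivative (\<lambda>E. ehess f (dissolve Y) (dissolve_derivative Y E))) (at Y)"
    unfolding ehess_def
    by (rule has_derivative_compose[OF has_derivative_dissolve])
       (use egrad_differentiable frechet_derivative_works in blast)
  then show ?thesis
    unfolding egrad_g_of[OF f_differentiable, abs_def] by (rule has_derivative_dissolve_derivative)
qed

lemma has_derivative_egrad_g_of_ehess: "(egrad (g_of f) has_derivative ehess (g_of f) Y) (at Y)"
  using has_derivative_egrad_g_of ehess_eqI[OF has_derivative_egrad_g_of] by simp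

lemma has_derivative_egrad_h_of:
  "(egrad (h_of f \<beta>) has_derivative (\<lambda>E. ehess (g_of f) Y E
     + \<beta> *\<^sub>R (E ** (transpose Y ** Y - mat 1) + Y ** (transpose Y ** E + transpose E ** Y)))) (at Y)"
proof -
  have "((\<lambda>Y. \<beta> *\<^sub>R (Y ** (transpose Y ** Y - mat 1))) has_derivative
     (\<lambda>E. \<beta> *\<^sub>R (Y ** (transpose Y ** E + transpose E ** Y) + E ** (transpose Y ** Y - mat 1)))) (at Y)"
    by (intro has_derivative_scaleR_right has_derivative_matrix_mult has_derivative_ident
        has_derivative_gram_defect)
  then have penalty: "((\<lambda>Y. \<beta> *\<^sub>R (Y ** (transpose Y ** Y - mat 1))) has_derivative
     (\<lambda>E. \<beta> *\<^sub>R (E ** (transpose Y ** Y - mat 1) + Y ** (transpose Y ** E + transpose E ** Y)))) (at Y)"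
    by (rule has_derivative_eq_rhs) (simp add: fun_eq_iff algebra_simps)
  from has_derivative_add[OF has_derivative_egrad_g_of_ehess penalty] show ?thesis
    unfolding egrad_h_of[OF f_differentiable, abs_def] .
qed

lemma ehess_g_of:
  "ehess (g_of f) Y E = dissolve_derivative Y (ehess f (dissolve Y) (dissolve_derivative Y E))
     + dissolve_second_derivative Y E (egrad f (dissolve Y))"
  by (simp add: ehess_eqI[OF has_derivative_egrad_g_of])

lemma ehess_h_of:
  "ehess (h_of f \<beta>) Y E = ehess (g_of f) Y E
     + \<beta> *\<^sub>R (E ** (transpose Y ** Y - mat 1) + Y ** (transpose Y ** E + transpose E ** Y))"
  by (simp add: ehess_eqI[OF has_derivative_egrad_h_of])

lemma linear_ehess_h_of: "linear (ehess (h_of f \<beta>) Y)"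
  using has_derivative_linear[OF has_derivative_egrad_h_of] ehess_eqI[OF has_derivative_egrad_h_of] by simp

lemma ehess_h_of_stiefel:
  assumes XtX: "transpose X ** X = mat 1"
  shows "ehess (h_of f \<beta>) X E = ehess (g_of f) X E + (2 * \<beta>) *\<^sub>R (X ** sym_part (transpose X ** E))"
  unfolding ehess_h_of XtX sym_part_def
  by (simp add: matrix_simps algebra_simps scaleR_2[symmetric])

context
  fixes X :: "real^'p^'n"
  assumes stationary: "first_order_stationary f X"
begin

lemma stiefel_stationary: "transpose X ** X = mat 1"
  using stationary unfolding first_order_stationary_def stiefel_def by simp

lemma egrad_stationary: "egrad f X = X ** sym_part (transpose X ** egrad f X)"
  using stationary unfolding first_order_stationary_def by simp

lemma ehess_g_of_tangent:
  assumes D: "D \<in> tangent_space X"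
  shows "ehess (g_of f) X D = rhess f X D"
proof -
  let ?S = "sym_part (transpose X ** egrad f X)"
  have "ehess (g_of f) X D = proj_tangent X (ehess f X D) + dissolve_second_derivative X D (X ** ?S)"
    unfolding ehess_g_of dissolve_stiefel[OF stiefel_stationary]
      dissolve_derivative_stiefel[OF stiefel_stationary] proj_tangent_tangent[OF D]
    by (subst egrad_stationary) simp
  also have "\<dots> = proj_tangent X (ehess f X D - D ** ?S)"
    by (simp add: dissolve_second_derivative_tangent[OF stiefel_stationary transpose_sym_part D]
        proj_tangent_diff)
  finally show ?thesis unfolding rhess_def .
qed

lemma proj_tangent_ehess_g_of_normal:
  assumes W: "transpose W = W"
  shows "proj_tangent X (ehess (g_of f) X (X ** W)) = 0"
proof -
  let ?S = "sym_part (transpose X ** egrad f X)"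
  have "ehess f X 0 = 0"
    using linear_ehess egrad_differentiable linear_0 by blast
  then have "ehess (g_of f) X (X ** W) = X ** (- (3/2) *\<^sub>R (?S ** W + W ** ?S))"
    unfolding ehess_g_of dissolve_stiefel[OF stiefel_stationary]
      dissolve_derivative_stiefel[OF stiefel_stationary] proj_tangent_normal[OF stiefel_stationary W]
    by (subst egrad_stationary)
       (simp add: dissolve_second_derivative_normal[OF stiefel_stationary transpose_sym_part W]
        proj_tangent_zero)
  moreover have "transpose (- (3/2) *\<^sub>R (?S ** W + W ** ?S)) = - (3/2) *\<^sub>R (?S ** W + W ** ?S)"
    by (simp add: matrix_simps transpose_sym_part W add.commute)
  ultimately show ?thesis by (simp add: proj_tangent_normal[OF stiefel_stationary])
qed

lemma ehess_h_of_tangent: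
  assumes D: "D \<in> tangent_space X"
  shows "ehess (h_of f \<beta>) X D = rhess f X D"
proof -
  have "sym_part (transpose X ** D) = 0"
    using D unfolding tangent_space_def by (simp add: sym_part_transpose_mult)
  then show ?thesis by (simp add: ehess_h_of_stiefel[OF stiefel_stationary] ehess_g_of_tangent[OF D])
qed

lemma ehess_h_of_normal:
  assumes W: "transpose W = W"
  shows "ehess (h_of f \<beta>) X (X ** W) = ehess (g_of f) X (X ** W) + (2 * \<beta>) *\<^sub>R (X ** W)"
  by (simp add: ehess_h_of_stiefel[OF stiefel_stationary] matrix_mult_orthonormal_cancel[OF stiefel_stationary]
      sym_part_symmetric W)

lemma proj_tangent_ehess_h_of:
  "proj_tangent X (ehess (h_of f \<beta>) X v) = rhess f X (proj_tangent X v)"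
proof -
  define W where "W = sym_part (transpose X ** v)"
  have W: "transpose W = W" unfolding W_def by (rule transpose_sym_part)
  have v: "v = proj_tangent X v + X ** W" unfolding W_def proj_tangent_def by simp
  have "ehess (h_of f \<beta>) X v = rhess f X (proj_tangent X v) + ehess (h_of f \<beta>) X (X ** W)"
    using linear_add[OF linear_ehess_h_of[of \<beta> X], of "proj_tangent X v" "X ** W"]
      ehess_h_of_tangent[OF proj_tangent_in_tangent_space[OF stiefel_stationary]] v by metis
  moreover have "proj_tangent X (rhess f X D) = rhess f X D" for D
    unfolding rhess_def by (rule proj_tangent_tangent[OF proj_tangent_in_tangent_space[OF stiefel_stationary]])
  moreover have "proj_tangent X (ehess (h_of f \<beta>) X (X ** W)) = 0"
    by (simp add: ehess_h_of_normal[OF W] proj_tangent_add proj_tangent_scaleR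
        proj_tangent_ehess_g_of_normal[OF W] proj_tangent_normal[OF stiefel_stationary W])
  ultimately show ?thesis by (simp add: proj_tangent_add)
qed

end

end

lemma locally_lipschitz_egrad_g_of:
  assumes "\<forall>Y. f differentiable (at Y)" and "locally_lipschitz (egrad f)"
  shows "locally_lipschitz (egrad (g_of f))"
proof -
  have "locally_lipschitz (dissolve :: real^'p^'n \<Rightarrow> _)"
    unfolding dissolve_def[abs_def]
    by (intro locally_lipschitz_diff locally_lipschitz_scaleR locally_lipschitz_matrix_mult
        locally_lipschitz_transpose locally_lipschitz_ident)
  then have "locally_lipschitz (\<lambda>Y. egrad f (dissolve Y))"
    by (rule locally_lipschitz_compose[OF assms(2)])
  then show ?thesis
    unfolding egrad_g_of[OF assms(1), abs_def] dissolve_derivative_def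
    by (intro locally_lipschitz_diff locally_lipschitz_add locally_lipschitz_scaleR
        locally_lipschitz_matrix_mult locally_lipschitz_transpose locally_lipschitz_ident)
qed

section \<open>The Lipschitz constant \<open>M\<^sub>2\<close>\<close>

lemma spec_norm_le_norm:
  fixes A :: "real^'p^'n"
  shows "spec_norm A \<le> real CARD('n) * real CARD('p) * norm A"
  unfolding spec_norm_def
proof (rule onorm_le_matrix_component)
  fix i j
  have "\<bar>A $ i $ j\<bar> \<le> norm (A $ i)" by (rule component_le_norm_cart)
  also have "\<dots> \<le> norm A" by (rule Finite_Cartesian_Product.norm_nth_le)
  finally show "\<bar>A $ i $ j\<bar> \<le> norm A" .
qed

lemma norm_le_spec_norm:
  fixes A :: "real^'p^'n"
  shows "norm A \<le> real CARD('n) * real CARD('p) * spec_norm A"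
proof -
  have "norm A \<le> (\<Sum>i\<in>UNIV. norm (A $ i))"
    unfolding norm_vec_def by (rule L2_set_le_sum) simp
  also have "\<dots> \<le> (\<Sum>i\<in>(UNIV::'n set). \<Sum>j\<in>(UNIV::'p set). spec_norm A)"
  proof (rule sum_mono)
    fix i
    have "norm (A $ i) \<le> (\<Sum>j\<in>UNIV. \<bar>A $ i $ j\<bar>)" by (rule norm_le_l1_cart)
    also have "\<dots> \<le> (\<Sum>j\<in>(UNIV::'p set). spec_norm A)"
      unfolding spec_norm_def by (rule sum_mono) (rule matrix_component_le_onorm)
    finally show "norm (A $ i) \<le> (\<Sum>j\<in>(UNIV::'p set). spec_norm A)" .
  qed
  also have "\<dots> = real CARD('n) * real CARD('p) * spec_norm A" by simp
  finally show ?thesis .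
qed

lemma spec_norm_triangle: "spec_norm (A + B) \<le> spec_norm A + spec_norm (B :: real^'p^'n)"
  unfolding spec_norm_def matrix_vector_mult_add_rdistrib
  by (rule onorm_triangle) auto

lemma spec_norm_stiefel:
  fixes X :: "real^'p^'n"
  assumes "transpose X ** X = mat 1"
  shows "spec_norm X \<le> 1"
  unfolding spec_norm_def
proof (rule onorm_le)
  fix w :: "real^'p"
  have "(X *v w) \<bullet> (X *v w) = (w v* transpose X) \<bullet> (X *v w)" by simp
  also have "\<dots> = w \<bullet> (transpose X *v (X *v w))" by (rule dot_lmul_matrix)
  also have "\<dots> = w \<bullet> w" by (simp add: matrix_vector_mul_assoc assms)
  finally show "norm (X *v w) \<le> 1 * norm w" by (simp add: norm_eq_sqrt_inner)
qed

lemma stiefel_interior_Omega: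
  fixes X :: "real^'p^'n"
  assumes "transpose X ** X = mat 1"
  shows "X \<in> interior Omega"
proof -
  define c where "c = real CARD('n) * real CARD('p)"
  have c: "c > 0" unfolding c_def by simp
  have "ball X (1 / (12 * c)) \<subseteq> Omega"
  proof
    fix Y assume "Y \<in> ball X (1 / (12 * c))"
    then have "c * norm (Y - X) \<le> 1/12"
      using c by (simp add: dist_norm norm_minus_commute field_simps)
    moreover have "spec_norm Y \<le> spec_norm X + spec_norm (Y - X)"
      using spec_norm_triangle[of X "Y - X"] by simp
    ultimately show "Y \<in> Omega"
      using spec_norm_stiefel[OF assms] spec_norm_le_norm[of "Y - X"]
      unfolding Omega_def c_def by simp
  qed
  moreover have "1 / (12 * c) > 0" using c by simp
  ultimately show ?thesis using mem_interior by blast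
qed

lemma egrad_g_of_M2_lipschitz:
  fixes f :: "real^'p^'n \<Rightarrow> real"
  assumes "locally_lipschitz (egrad (g_of f))" and "Y \<in> Omega" "Z \<in> Omega"
  shows "norm (egrad (g_of f) Y - egrad (g_of f) Z) \<le> M2 f * norm (Y - Z)"
proof (cases "Y = Z")
  case False
  define c where "c = real CARD('n) * real CARD('p)"
  have "Omega \<subseteq> cball (0 :: real^'p^'n) (2 * c)"
  proof
    fix Y :: "real^'p^'n" assume "Y \<in> Omega"
    then have "c * spec_norm Y \<le> c * 2"
      unfolding Omega_def c_def by (intro mult_left_mono) auto
    moreover have "norm Y \<le> c * spec_norm Y"
      unfolding c_def by (rule norm_le_spec_norm)
    ultimately show "Y \<in> cball 0 (2 * c)" by simp
  qed
  moreover obtain L where "L-lipschitz_on (cball 0 (2 * c)) (egrad (g_of f))"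
    using locally_lipschitz_imp_lipschitz_on_compact[OF assms(1) compact_cball] by blast
  ultimately have L: "L-lipschitz_on Omega (egrad (g_of f))"
    by (rule lipschitz_on_subset[rotated])
  let ?Q = "{norm (egrad (g_of f) X - egrad (g_of f) X') / norm (X - X') | X X'.
              X \<in> Omega \<and> X' \<in> Omega \<and> X \<noteq> X'}"
  have "q \<le> L" if "q \<in> ?Q" for q
  proof -
    obtain A B where "q = norm (egrad (g_of f) A - egrad (g_of f) B) / norm (A - B)"
      and "A \<in> Omega" "B \<in> Omega" "A \<noteq> B"
      using \<open>q \<in> ?Q\<close> by blast
    then show ?thesis using lipschitz_on_normD[OF L] by (simp add: divide_le_eq)
  qed
  then have "bdd_above ?Q" by (rule bdd_aboveI)
  moreover have "norm (egrad (g_of f) Y - egrad (g_of f) Z) / norm (Y - Z) \<in> ?Q"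
    using assms(2,3) False by blast
  ultimately have "norm (egrad (g_of f) Y - egrad (g_of f) Z) / norm (Y - Z) \<le> M2 f"
    unfolding M2_def by (intro cSup_upper)
  then show ?thesis using False by (simp add: divide_le_eq)
qed simp

lemma norm_ehess_g_of_le_M2:
  fixes f :: "real^'p^'n \<Rightarrow> real"
  assumes "\<forall>Y. f differentiable (at Y)" and "locally_lipschitz (egrad f)"
    and "\<forall>Y. egrad f differentiable (at Y)" and "transpose X ** X = mat 1"
  shows "norm (ehess (g_of f) X v) \<le> M2 f * norm v"
proof (rule has_derivative_norm_le_lipschitz_at)
  show "(egrad (g_of f) has_derivative ehess (g_of f) X) (at X)"
    by (rule has_derivative_egrad_g_of_ehess[OF assms(1,3)])
  show "X \<in> interior Omega" by (rule stiefel_interior_Omega[OF assms(4)])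
  then have "X \<in> Omega" using interior_subset by blast
  then show "norm (egrad (g_of f) Y - egrad (g_of f) X) \<le> M2 f * norm (Y - X)" if "Y \<in> Omega" for Y
    by (rule egrad_g_of_M2_lipschitz[OF locally_lipschitz_egrad_g_of[OF assms(1,2)] that])
qed

lemma ehess_h_of_eigenvalue:
  fixes f :: "real^'p^'n \<Rightarrow> real"
  assumes f: "\<forall>Y. f differentiable (at Y)" "locally_lipschitz (egrad f)"
    "\<forall>Y. egrad f differentiable (at Y)"
    and stationary: "first_order_stationary f X"
    and "v \<noteq> 0" and v: "ehess (h_of f \<beta>) X v = l *\<^sub>R v"
  shows "is_eigenvalue_on (tangent_space X) (rhess f X) l \<or> l \<ge> 2 * \<beta> - M2 f"
proof (cases "proj_tangent X v = 0")
  case False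
  have "rhess f X (proj_tangent X v) = l *\<^sub>R proj_tangent X v"
    using proj_tangent_ehess_h_of[OF f(1,3) stationary, of \<beta> v] v by (simp add: proj_tangent_scaleR)
  then show ?thesis unfolding is_eigenvalue_on_def
    using False proj_tangent_in_tangent_space[OF stiefel_stationary[OF f(1,3) stationary]] by blast
next
  case True
  define W where "W = sym_part (transpose X ** v)"
  from True have "v = X ** W" unfolding W_def proj_tangent_def by (simp only: right_minus_eq)
  moreover have "ehess (h_of f \<beta>) X (X ** W) = ehess (g_of f) X (X ** W) + (2 * \<beta>) *\<^sub>R (X ** W)"
    unfolding W_def by (rule ehess_h_of_normal[OF f(1,3) stationary transpose_sym_part])
  ultimately have "ehess (g_of f) X v = (l - 2 * \<beta>) *\<^sub>R v"
    using v by (simp add: algebra_simps)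
  then have "\<bar>l - 2 * \<beta>\<bar> * norm v \<le> M2 f * norm v"
    using norm_ehess_g_of_le_M2[OF f stiefel_stationary[OF f(1,3) stationary], of v] by simp
  then have "\<bar>l - 2 * \<beta>\<bar> \<le> M2 f" using \<open>v \<noteq> 0\<close> by simp
  then show ?thesis by linarith
qed

theorem mainTheorem12:
  fixes f :: "real^'p^'n \<Rightarrow> real" and \<beta> :: real and X :: "real^'p^'n"
  assumes "CARD('p) \<le> CARD('n)"
    and "\<beta> > 0"
    and "\<forall>Y. f differentiable (at Y)"
    and "locally_lipschitz f"
    and "locally_lipschitz (egrad f)"
    and "\<forall>Y. egrad f differentiable (at Y)"
    and "first_order_stationary f X"
  shows "(\<forall>l. is_eigenvalue_on (tangent_space X) (rhess f X) l
              \<longrightarrow> is_eigenvalue_on UNIV (ehess (h_of f \<beta>) X) l)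
       \<and> (\<forall>l. is_eigenvalue_on UNIV (ehess (h_of f \<beta>) X) l
              \<longrightarrow> is_eigenvalue_on (tangent_space X) (rhess f X) l \<or> l \<ge> 2 * \<beta> - M2 f)"
proof (intro conjI allI impI)
  fix l
  assume "is_eigenvalue_on (tangent_space X) (rhess f X) l"
  then show "is_eigenvalue_on UNIV (ehess (h_of f \<beta>) X) l"
    unfolding is_eigenvalue_on_def using ehess_h_of_tangent[OF assms(3,6,7)] by auto
next
  fix l
  assume "is_eigenvalue_on UNIV (ehess (h_of f \<beta>) X) l"
  then obtain v where "v \<noteq> 0" "ehess (h_of f \<beta>) X v = l *\<^sub>R v"
    unfolding is_eigenvalue_on_def by blast
  then show "is_eigenvalue_on (tangent_space X) (rhess f X) l \<or> l \<ge> 2 * \<beta> - M2 f"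
    by (rule ehess_h_of_eigenvalue[OF assms(3,5,6,7)])
qed

end
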